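(* Let $k\ge16/(3\sqrt3)$ be real. For $x=e^{i\theta}$ on the unit circle (with $\cos\theta\ne0$) set $$y_{2}(x)=\frac{k-\sqrt{k^2-16\cos^2\theta\,(3-4\cos^2\theta)}}{4\cos\theta}.$$ Then $|y_2(x)|\le1$ for all such $x$.
   Context: $y_2(x)$ is the root of smaller absolute value in $y$ of $(x+x^{-1})y^2-ky-(x^3+x^{-3})=0$ (which equals $-y^3R_k(x/y,1/(xy))$ for $R_k(x,y)=y^3-y+x^3-x+kxy$). Here $\sqrt{\cdot}$ is the principal square root. *)

theory Defs
  imports "HOL-Analysis.Analysis"
begin

text \<open>y_2(x) for x = e^{i theta}, written via theta; principal complex square root.\<close>
definition y2 :: "real \<Rightarrow> real \<Rightarrow> complex" where
  "y2 k \<theta> = (complex_of_real k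
      - csqrt (complex_of_real (k^2 - 16 * (cos \<theta>)^2 * (3 - 4 * (cos \<theta>)^2))))
      / complex_of_real (4 * cos \<theta>)"

end

theory Submission
  imports Defs
begin

text \<open>With \<open>t = \<bar>cos \<theta>\<bar>\<close>, the discriminant \<open>D = k\<^sup>2 - 16 t\<^sup>2 (3 - 4 t\<^sup>2)\<close> satisfies
  \<open>D - (k - 4t)\<^sup>2 = 8t (k - 8t(1 - t\<^sup>2))\<close> and \<open>(k + 4t)\<^sup>2 - D = 8kt + 64t\<^sup>2(1 - t\<^sup>2)\<close>.
  The cubic \<open>8t(1 - t\<^sup>2)\<close> attains its maximum \<open>16/(3\<surd>3)\<close> on \<open>t \<ge> 0\<close> at \<open>t = 1/\<surd>3\<close>,
  so the hypothesis on \<open>k\<close> makes both differences nonnegative.  Hence \<open>D \<ge> 0\<close>, \<open>y\<^sub>2\<close> is real,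
  and \<open>\<bar>k - \<surd>D\<bar> \<le> 4t\<close>, which is \<open>\<bar>y\<^sub>2\<bar> \<le> 1\<close>.\<close>

lemma cubic_le_max:
  fixes t :: real
  assumes "t \<ge> 0"
  shows "8 * t * (1 - t\<^sup>2) \<le> 16 / (3 * sqrt 3)"
proof -
  define r where "r = sqrt 3"
  have r2: "r\<^sup>2 = 3" and r_pos: "r > 0" by (auto simp: r_def)
  have factor: "24*r*t^3 - 24*r*t + 16 = 24*r*(t - 1/r)\<^sup>2*(t + 2/r)"
    using r_pos r2 by (simp add: field_simps power2_eq_square power3_eq_cube)
  have "0 \<le> 24*r*(t - 1/r)\<^sup>2*(t + 2/r)" using r_pos assms by simp
  hence "8 * t * (1 - t\<^sup>2) * (3*r) \<le> 16"
    using factor by (simp add: algebra_simps power2_eq_square power3_eq_cube)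
  thus ?thesis using r_pos by (simp add: r_def field_simps)
qed

lemma discriminant_ge_square:
  fixes k c :: real
  assumes "8 * \<bar>c\<bar> * (1 - c\<^sup>2) \<le> k"
  shows "(k - 4 * \<bar>c\<bar>)\<^sup>2 \<le> k\<^sup>2 - 16 * c\<^sup>2 * (3 - 4 * c\<^sup>2)"
proof -
  have "k\<^sup>2 - 16 * c\<^sup>2 * (3 - 4 * c\<^sup>2) - (k - 4 * \<bar>c\<bar>)\<^sup>2 = 8 * \<bar>c\<bar> * (k - 8 * \<bar>c\<bar> * (1 - c\<^sup>2))"
    by (simp add: power2_eq_square algebra_simps)
  moreover have "0 \<le> 8 * \<bar>c\<bar> * (k - 8 * \<bar>c\<bar> * (1 - c\<^sup>2))" using assms by simp
  ultimately show ?thesis by linarith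
qed

lemma discriminant_le_square:
  fixes k c :: real
  assumes "k \<ge> 0" and "c\<^sup>2 \<le> 1"
  shows "k\<^sup>2 - 16 * c\<^sup>2 * (3 - 4 * c\<^sup>2) \<le> (k + 4 * \<bar>c\<bar>)\<^sup>2"
proof -
  have "(k + 4 * \<bar>c\<bar>)\<^sup>2 - (k\<^sup>2 - 16 * c\<^sup>2 * (3 - 4 * c\<^sup>2)) = 8 * k * \<bar>c\<bar> + 64 * c\<^sup>2 * (1 - c\<^sup>2)"
    by (simp add: power2_eq_square algebra_simps)
  moreover have "0 \<le> 8 * k * \<bar>c\<bar> + 64 * c\<^sup>2 * (1 - c\<^sup>2)" using assms by simp
  ultimately show ?thesis by linarith
qed

lemma abs_diff_sqrt_discriminant_le:
  fixes k c :: real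
  assumes "8 * \<bar>c\<bar> * (1 - c\<^sup>2) \<le> k" and "c\<^sup>2 \<le> 1"
  shows "\<bar>k - sqrt (k\<^sup>2 - 16 * c\<^sup>2 * (3 - 4 * c\<^sup>2))\<bar> \<le> 4 * \<bar>c\<bar>"
proof -
  let ?D = "k\<^sup>2 - 16 * c\<^sup>2 * (3 - 4 * c\<^sup>2)"
  have k_nonneg: "k \<ge> 0"
    using assms by (smt (verit) abs_ge_zero mult_nonneg_nonneg zero_le_power2)
  have "k - 4 * \<bar>c\<bar> \<le> sqrt ?D"
    using real_le_rsqrt[OF discriminant_ge_square[OF assms(1)]] by simp
  moreover have "sqrt ?D \<le> k + 4 * \<bar>c\<bar>"
    using real_sqrt_le_mono[OF discriminant_le_square[OF k_nonneg assms(2)]] k_nonneg by simp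
  ultimately show ?thesis by linarith
qed

theorem lemma3:
  fixes k \<theta> :: real
  assumes "k \<ge> 16 / (3 * sqrt 3)"
    and "cos \<theta> \<noteq> 0"
  shows "cmod (y2 k \<theta>) \<le> 1"
proof -
  define c where "c = cos \<theta>"
  define D where "D = k\<^sup>2 - 16 * c\<^sup>2 * (3 - 4 * c\<^sup>2)"
  have c_sq_le: "c\<^sup>2 \<le> 1" by (simp add: c_def abs_square_le_1)
  have k_bound: "8 * \<bar>c\<bar> * (1 - c\<^sup>2) \<le> k"
    using cubic_le_max[of "\<bar>c\<bar>"] assms(1) by simp
  have "D \<ge> 0"
    using discriminant_ge_square[OF k_bound] unfolding D_def by (smt (verit) zero_le_power2)
  hence "y2 k \<theta> = complex_of_real ((k - sqrt D) / (4 * c))"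
    by (simp add: y2_def D_def c_def csqrt_of_real)
  hence "cmod (y2 k \<theta>) = \<bar>(k - sqrt D) / (4 * c)\<bar>"
    by (simp only: norm_of_real)
  also have "\<dots> \<le> 1"
    using abs_diff_sqrt_discriminant_le[OF k_bound c_sq_le] assms(2)
    by (simp add: D_def c_def abs_divide)
  finally show ?thesis .
qed

end
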